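(* Fix $j\in\{1,\dots,p\}$ and assume the setting in the context with $\tilde m(\mathbf x)=\sum_{\ell=1}^p m_\ell(x^{(\ell)})$ for functions $m_\ell:[0,1]\to\mathbb R$, $\sup_{\mathbf x\in[0,1]^p}|\tilde m(\mathbf x)|\le K$ for some $K>0$, $\mathbb E[\varepsilon^4]<\infty$, and $\mathrm{Var}(m_j(X^{(j)}))>0$. Then there is a constant $c_1>0$ such that $$\mathbb E\big[|h_\gamma-I(j)|^2\big]=\zeta_\gamma\sim \frac{c_1}{\gamma}\qquad(\gamma\to\infty).$$
   Context: Setting. Let $p\ge 1$. Let $\mathbf X=(X^{(1)},\dots,X^{(p)})$ be uniformly distributed on $[0,1]^p$ (so its coordinates are mutually independent), and let $Y=\tilde m(\mathbf X)+\varepsilon$, where $\tilde m:[0,1]^p\to\mathbb R$ is measurable, $\varepsilon$ is independent of $\mathbf X$, $\mathbb E[\varepsilon]=0$ and $\mathrm{Var}(\varepsilon)=\sigma^2>0$. Let $\mathbf Z_i=(\mathbf X_i,Y_i)$, $i=1,2,\dots$, be i.i.d. copies of $(\mathbf X,Y)$. Fix the feature index $j$. Permuted points and kernel. A derangement of a finite set $S$ is a bijection $\pi:S\to S$ with $\pi(i)\neq i$ for all $i$. For a derangement $\pi$ of an index set $S$ and $i\in S$, let $\mathbf X_i^{\pi}$ be the vector $\mathbf X_i$ with its $j$-th coordinate replaced by $X_{\pi(i)}^{(j)}$. For an integer $\gamma\ge 2$ define the random variable $$h_\gamma=h_\gamma(\mathbf Z_1,\dots,\mathbf Z_\gamma;\pi)=\frac1\gamma\sum_{i=1}^\gamma\Big\{\big(Y_i-\tilde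 m(\mathbf X_i^{\pi})\big)^2-\big(Y_i-\tilde m(\mathbf X_i)\big)^2\Big\},$$ where $\pi$ is a uniformly distributed random derangement of $\{1,\dots,\gamma\}$, independent of the data. Set $\zeta_\gamma=\mathrm{Var}(h_\gamma)$. Target. $I(j)=\mathbb E\big[(Y_1-\tilde m(\mathbf X_{j,1}))^2\big]-\sigma^2$, where $\mathbf X_{j,1}$ is $\mathbf X_1$ with its $j$-th coordinate replaced by an independent copy of $X_1^{(j)}$ (independent of everything else). *)

theory Defs
  imports "HOL-Probability.Probability" "HOL-Combinatorics.Permutations" "HOL-Library.Landau_Symbols"
begin

definition unif01 :: "real measure" where
  "unif01 = restrict_space lborel {0..1}"

definition Xdist :: "nat \<Rightarrow> (nat \<Rightarrow> real) measure" where
  "Xdist p = PiM {1..p} (\<lambda>_. unif01)"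

definition mtilde :: "(nat \<Rightarrow> real \<Rightarrow> real) \<Rightarrow> nat \<Rightarrow> (nat \<Rightarrow> real) \<Rightarrow> real" where
  "mtilde m p x = (\<Sum>l\<in>{1..p}. m l (x l))"

text \<open>Distribution of one observation (X, eps), X and eps independent; Y = f X + eps.\<close>
definition Zdist :: "nat \<Rightarrow> real measure \<Rightarrow> ((nat \<Rightarrow> real) \<times> real) measure" where
  "Zdist p E = Xdist p \<Otimes>\<^sub>M E"

definition derangements :: "nat set \<Rightarrow> (nat \<Rightarrow> nat) set" where
  "derangements S = {\<pi>. \<pi> permutes S \<and> (\<forall>i\<in>S. \<pi> i \<noteq> i)}"

definition sample_space :: "nat \<Rightarrow> real measure \<Rightarrow> nat
    \<Rightarrow> ((nat \<Rightarrow> (nat \<Rightarrow> real) \<times> real) \<times> (nat \<Rightarrow> nat)) measure" where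
  "sample_space p E \<gamma> =
     PiM {1..\<gamma>} (\<lambda>_. Zdist p E) \<Otimes>\<^sub>M measure_pmf (pmf_of_set (derangements {1..\<gamma>}))"

definition hgam :: "((nat \<Rightarrow> real) \<Rightarrow> real) \<Rightarrow> nat \<Rightarrow> nat
    \<Rightarrow> (nat \<Rightarrow> (nat \<Rightarrow> real) \<times> real) \<times> (nat \<Rightarrow> nat) \<Rightarrow> real" where
  "hgam f j \<gamma> \<omega> =
     (1 / real \<gamma>) * (\<Sum>i\<in>{1..\<gamma>}.
        (f (fst (fst \<omega> i)) + snd (fst \<omega> i)
            - f ((fst (fst \<omega> i))(j := fst (fst \<omega> (snd \<omega> i)) j)))\<^sup>2
        - (f (fst (fst \<omega> i)) + snd (fst \<omega> i) - f (fst (fst \<omega> i)))\<^sup>2)"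

definition var :: "'a measure \<Rightarrow> ('a \<Rightarrow> real) \<Rightarrow> real" where
  "var M g = (\<integral>x. (g x - (\<integral>y. g y \<partial>M))\<^sup>2 \<partial>M)"

definition zeta :: "((nat \<Rightarrow> real) \<Rightarrow> real) \<Rightarrow> nat \<Rightarrow> real measure \<Rightarrow> nat \<Rightarrow> nat \<Rightarrow> real" where
  "zeta f p E j \<gamma> = var (sample_space p E \<gamma>) (hgam f j \<gamma>)"

text \<open>I(j) = E[(Y - f(X_j))^2] - sigma^2, with X_j = X whose j-th coordinate is replaced by an
  independent uniform copy u.\<close>
definition importance :: "((nat \<Rightarrow> real) \<Rightarrow> real) \<Rightarrow> nat \<Rightarrow> real measure \<Rightarrow> nat \<Rightarrow> real" where
  "importance f p E j =
     (\<integral>\<omega>. (f (fst (fst \<omega>)) + snd (fst \<omega>) - f ((fst (fst \<omega>))(j := snd \<omega>)))\<^sup>2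
        \<partial>(Zdist p E \<Otimes>\<^sub>M unif01)) - var E (\<lambda>e. e)"

end

theory Submission
  imports Defs "HOL-Real_Asymp.Real_Asymp"
begin

text \<open>
  Put \<open>b = m j - E m j\<close>, \<open>B (x, e) = b (x j)\<close> and \<open>v (x, e) = B (x, e) + e\<close>. By additivity
  only the \<open>j\<close>-th component of \<open>mtilde\<close> survives in the kernel, and since the derangement
  \<open>\<pi>\<close> permutes the indices,
  \<open>\<gamma> h\<^sub>\<gamma> = \<Sum>\<^sub>i g(Z\<^sub>i) - 2 \<Sum>\<^sub>i v(Z\<^sub>i) B(Z\<^bsub>\<pi> i\<^esub>) + 2 \<gamma> Var b\<close> with \<open>g = 2 B\<^sup>2 - 2 Var b + 2 e B\<close>,
  while \<open>I(j) = 2 Var b\<close>. Both sums are centred; the first has i.i.d. terms, and two summands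
  of the second are correlated only if they coincide or their indices form a 2-cycle of \<open>\<pi>\<close>.
  Hence, given \<open>\<pi>\<close>, \<open>E (h\<^sub>\<gamma> - I(j))\<^sup>2 = (\<gamma> c1 + 4 (Var b)\<^sup>2 N(\<pi>)) / \<gamma>\<^sup>2\<close> with \<open>N(\<pi>)\<close> the number of
  points on 2-cycles and \<open>c1 = E g\<^sup>2 + 4 (Var b + \<sigma>\<^sup>2) Var b\<close>. For a uniform derangement
  \<open>E N \<le> \<gamma> / (\<gamma> - 2)\<close>, so \<open>\<zeta>\<^sub>\<gamma> = c1 / \<gamma> + O(1 / \<gamma>\<^sup>2)\<close>.
\<close>

section \<open>Integrals over products of probability spaces\<close>

lemma
  fixes f g :: "_ \<Rightarrow> real"
  assumes "prob_space M1" "prob_space M2" "integrable M1 f" "integrable M2 g"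
  shows integrable_pair_mult: "integrable (M1 \<Otimes>\<^sub>M M2) (\<lambda>x. f (fst x) * g (snd x))"
    and integral_pair_mult:
      "(\<integral>x. f (fst x) * g (snd x) \<partial>(M1 \<Otimes>\<^sub>M M2)) = integral\<^sup>L M1 f * integral\<^sup>L M2 g"
proof -
  interpret M1: prob_space M1 by fact
  interpret M2: prob_space M2 by fact
  interpret pair_sigma_finite M1 M2 by unfold_locales
  show int: "integrable (M1 \<Otimes>\<^sub>M M2) (\<lambda>x. f (fst x) * g (snd x))"
  proof (rule Fubini_integrable)
    show "(\<lambda>x. f (fst x) * g (snd x)) \<in> borel_measurable (M1 \<Otimes>\<^sub>M M2)"
      using assms by measurable
    have "integrable M1 (\<lambda>x. norm (f x) * (\<integral>y. norm (g y) \<partial>M2))"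
      using assms by (intro integrable_mult_left) auto
    then show "integrable M1 (\<lambda>x. \<integral>y. norm (f (fst (x, y)) * g (snd (x, y))) \<partial>M2)"
      by (simp add: norm_mult abs_mult)
    show "AE x in M1. integrable M2 (\<lambda>y. f (fst (x, y)) * g (snd (x, y)))"
      using assms by auto
  qed
  show "(\<integral>x. f (fst x) * g (snd x) \<partial>(M1 \<Otimes>\<^sub>M M2)) = integral\<^sup>L M1 f * integral\<^sup>L M2 g"
    using integral_fst'[OF int] by simp
qed

lemma
  fixes F :: "'i \<Rightarrow> 'a \<Rightarrow> real"
  assumes N: "prob_space N" and I: "finite I" and J: "J \<subseteq> I"
    and int: "\<And>l. l \<in> J \<Longrightarrow> integrable N (F l)"
  shows integrable_PiM_prod_coords: "integrable (PiM I (\<lambda>_. N)) (\<lambda>x. \<Prod>l\<in>J. F l (x l))"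
    and integral_PiM_prod_coords:
      "(\<integral>x. (\<Prod>l\<in>J. F l (x l)) \<partial>PiM I (\<lambda>_. N)) = (\<Prod>l\<in>J. integral\<^sup>L N (F l))"
proof -
  interpret N: prob_space N by fact
  interpret product_sigma_finite "\<lambda>_. N" by unfold_locales
  define G where "G l y = (if l \<in> J then F l y else 1)" for l y
  have G: "integrable N (G l)" if "l \<in> I" for l
    using int by (cases "l \<in> J") (auto simp: G_def[abs_def])
  have "(\<Prod>l\<in>I. G l (x l)) = (\<Prod>l\<in>J. F l (x l))" for x
    using J I by (simp add: G_def prod.If_cases Int_absorb1)
  moreover have "(\<Prod>l\<in>I. integral\<^sup>L N (G l)) = (\<Prod>l\<in>I. if l \<in> J then integral\<^sup>L N (F l) else 1)"
    by (intro prod.cong) (auto simp: G_def[abs_def] N.prob_space)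
  then have "(\<Prod>l\<in>I. integral\<^sup>L N (G l)) = (\<Prod>l\<in>J. integral\<^sup>L N (F l))"
    using J I by (simp add: prod.If_cases Int_absorb1)
  ultimately show "integrable (PiM I (\<lambda>_. N)) (\<lambda>x. \<Prod>l\<in>J. F l (x l))"
    and "(\<integral>x. (\<Prod>l\<in>J. F l (x l)) \<partial>PiM I (\<lambda>_. N)) = (\<Prod>l\<in>J. integral\<^sup>L N (F l))"
    using product_integrable_prod[of I G, OF I G] product_integral_prod[of I G, OF I G] by simp_all
qed

lemma PiM_one_coord:
  fixes f :: "'a \<Rightarrow> real"
  assumes "prob_space N" "finite I" "i \<in> I" "integrable N f"
  shows "integrable (PiM I (\<lambda>_. N)) (\<lambda>z. f (z i))"
    and "(\<integral>z. f (z i) \<partial>PiM I (\<lambda>_. N)) = integral\<^sup>L N f"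
  using integrable_PiM_prod_coords[OF assms(1,2), of "{i}" "\<lambda>_. f"]
    integral_PiM_prod_coords[OF assms(1,2), of "{i}" "\<lambda>_. f"] assms(3,4) by auto

lemma PiM_two_coords:
  fixes f g :: "'a \<Rightarrow> real"
  assumes "prob_space N" "finite I" "i \<in> I" "k \<in> I" "i \<noteq> k"
    and "integrable N f" "integrable N g"
  shows "integrable (PiM I (\<lambda>_. N)) (\<lambda>z. f (z i) * g (z k))"
    and "(\<integral>z. f (z i) * g (z k) \<partial>PiM I (\<lambda>_. N)) = integral\<^sup>L N f * integral\<^sup>L N g"
  using integrable_PiM_prod_coords[OF assms(1,2), of "{i,k}" "\<lambda>l. if l = i then f else g"]
    integral_PiM_prod_coords[OF assms(1,2), of "{i,k}" "\<lambda>l. if l = i then f else g"] assms(3-)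
  by auto

lemma PiM_three_coords:
  fixes f g h :: "'a \<Rightarrow> real"
  assumes "prob_space N" "finite I" "i \<in> I" "k \<in> I" "l \<in> I" "i \<noteq> k" "i \<noteq> l" "k \<noteq> l"
    and "integrable N f" "integrable N g" "integrable N h"
  shows "integrable (PiM I (\<lambda>_. N)) (\<lambda>z. f (z i) * g (z k) * h (z l))"
    and "(\<integral>z. f (z i) * g (z k) * h (z l) \<partial>PiM I (\<lambda>_. N))
           = integral\<^sup>L N f * integral\<^sup>L N g * integral\<^sup>L N h"
  using integrable_PiM_prod_coords[OF assms(1,2), of "{i,k,l}"
      "\<lambda>x. if x = i then f else if x = k then g else h"]
    integral_PiM_prod_coords[OF assms(1,2), of "{i,k,l}"
      "\<lambda>x. if x = i then f else if x = k then g else h"] assms(3-)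
  by (auto simp: mult.assoc)

lemma PiM_four_coords:
  fixes f g h q :: "'a \<Rightarrow> real"
  assumes "prob_space N" "finite I" "i \<in> I" "k \<in> I" "l \<in> I" "r \<in> I"
    "i \<noteq> k" "i \<noteq> l" "k \<noteq> l" "i \<noteq> r" "k \<noteq> r" "l \<noteq> r"
    and "integrable N f" "integrable N g" "integrable N h" "integrable N q"
  shows "integrable (PiM I (\<lambda>_. N)) (\<lambda>z. f (z i) * g (z k) * h (z l) * q (z r))"
    and "(\<integral>z. f (z i) * g (z k) * h (z l) * q (z r) \<partial>PiM I (\<lambda>_. N))
           = integral\<^sup>L N f * integral\<^sup>L N g * integral\<^sup>L N h * integral\<^sup>L N q"
  using integrable_PiM_prod_coords[OF assms(1,2), of "{i,k,l,r}"
      "\<lambda>x. if x = i then f else if x = k then g else if x = l then h else q"]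
    integral_PiM_prod_coords[OF assms(1,2), of "{i,k,l,r}"
      "\<lambda>x. if x = i then f else if x = k then g else if x = l then h else q"] assms(3-)
  by (auto simp: mult.assoc)

lemma integral_pair_pmf_of_set:
  fixes F :: "'a \<times> 'b \<Rightarrow> real"
  assumes P: "prob_space P" and D: "finite D" "D \<noteq> {}"
    and meas: "F \<in> borel_measurable (P \<Otimes>\<^sub>M measure_pmf (pmf_of_set D))"
    and int: "\<And>d. d \<in> D \<Longrightarrow> integrable P (\<lambda>z. F (z, d))"
  shows "integral\<^sup>L (P \<Otimes>\<^sub>M measure_pmf (pmf_of_set D)) F = (\<Sum>d\<in>D. \<integral>z. F (z, d) \<partial>P) / card D"
proof -
  interpret P: prob_space P by fact
  interpret pair_sigma_finite P "measure_pmf (pmf_of_set D)" by unfold_locales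
  have "(\<integral>\<^sup>+ x. ennreal (norm (F x)) \<partial>(P \<Otimes>\<^sub>M measure_pmf (pmf_of_set D)))
      = (\<integral>\<^sup>+ y. (\<integral>\<^sup>+ x. ennreal (norm (F (x, y))) \<partial>P) \<partial>measure_pmf (pmf_of_set D))"
    using meas by (subst nn_integral_snd[symmetric]) auto
  also have "\<dots> = (\<Sum>y\<in>D. (\<integral>\<^sup>+ x. ennreal (norm (F (x, y))) \<partial>P)) / card D"
    using D by (simp add: nn_integral_pmf_of_set)
  also have "\<dots> < \<infinity>"
  proof -
    have "(\<Sum>y\<in>D. (\<integral>\<^sup>+ x. ennreal (norm (F (x, y))) \<partial>P)) < \<infinity>"
      using int D(1) by (simp add: integrable_iff_bounded less_top[symmetric])
    then show ?thesis using D
      by (simp add: divide_ennreal_def ennreal_mult_less_top card_gt_0_iff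
          ennreal_of_nat_eq_real_of_nat inverse_ennreal)
  qed
  finally have I: "integrable (P \<Otimes>\<^sub>M measure_pmf (pmf_of_set D)) F"
    using meas by (simp add: integrable_iff_bounded)
  have "integral\<^sup>L (P \<Otimes>\<^sub>M measure_pmf (pmf_of_set D)) F
      = (\<integral>y. (\<integral>x. F (x, y) \<partial>P) \<partial>measure_pmf (pmf_of_set D))"
    using integral_snd[of "\<lambda>x y. F (x,y)"] I by simp
  also have "\<dots> = (\<Sum>d\<in>D. \<integral>z. F (z, d) \<partial>P) / card D"
    using D by (simp add: integral_pmf_of_set)
  finally show ?thesis .
qed

lemma integrable_power_le:
  fixes M :: "real measure" and n l :: nat
  assumes "finite_measure M" and M: "sets M = sets borel" and int: "integrable M (\<lambda>x::real. x ^ n)"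
    and "even n" "l \<le> n"
  shows "integrable M (\<lambda>x. x ^ l)"
proof (rule Bochner_Integration.integrable_bound)
  interpret finite_measure M by fact
  show "integrable M (\<lambda>x. 1 + x ^ n)" using int by simp
  show "(\<lambda>x. x ^ l) \<in> borel_measurable M" using M by measurable
  have "\<bar>x\<bar> ^ l \<le> 1 + x ^ n" for x :: real
  proof (cases "\<bar>x\<bar> \<le> 1")
    case True
    then show ?thesis using \<open>even n\<close> by (simp add: power_le_one zero_le_even_power add_increasing2)
  next
    case False
    then have "\<bar>x\<bar> ^ l \<le> \<bar>x\<bar> ^ n" using \<open>l \<le> n\<close> by (intro power_increasing) auto
    then show ?thesis using \<open>even n\<close> by (simp add: power_even_abs)
  qed
  then show "AE x in M. norm (x ^ l) \<le> norm (1 + x ^ n)"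
    using \<open>even n\<close> by (intro AE_I2) (simp add: power_abs zero_le_even_power add_nonneg_nonneg)
qed

lemma
  fixes f :: "'i \<Rightarrow> 'k \<Rightarrow> 'a \<Rightarrow> real"
  assumes "finite I" "finite K" and int: "\<And>i k. i \<in> I \<Longrightarrow> k \<in> K \<Longrightarrow> integrable M (f i k)"
  shows integrable_double_sum: "integrable M (\<lambda>x. \<Sum>i\<in>I. \<Sum>k\<in>K. f i k x)"
    and integral_double_sum: "(\<integral>x. (\<Sum>i\<in>I. \<Sum>k\<in>K. f i k x) \<partial>M) = (\<Sum>i\<in>I. \<Sum>k\<in>K. integral\<^sup>L M (f i k))"
  using int by (auto intro!: sum.cong)

section \<open>Derangements and their points of period two\<close>

definition period2_points :: "(nat \<Rightarrow> nat) \<Rightarrow> nat set \<Rightarrow> nat set" where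
  "period2_points \<pi> S = {i \<in> S. \<pi> (\<pi> i) = i}"

lemma finite_derangements: "finite S \<Longrightarrow> finite (derangements S)"
  by (rule finite_subset[of _ "{\<pi>. \<pi> permutes S}"]) (auto simp: derangements_def finite_permutations)

lemma derangements_atLeastAtMost_nonempty:
  assumes "2 \<le> n"
  shows "derangements {1..n} \<noteq> {}"
proof -
  define c where "c i = (if i \<in> {1..<n} then Suc i else if i = n then 1 else i)" for i
  have inj: "inj_on c {1..n}" and sub: "c ` {1..n} \<subseteq> {1..n}"
    unfolding inj_on_def c_def using assms by auto
  then have "bij_betw c {1..n} {1..n}"
    using endo_inj_surj[OF _ sub inj] by (simp add: bij_betw_def)
  then have "c permutes {1..n}"
    by (rule bij_imp_permutes) (use assms in \<open>auto simp: c_def\<close>)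
  moreover have "\<forall>i\<in>{1..n}. c i \<noteq> i" unfolding c_def using assms by auto
  ultimately have "c \<in> derangements {1..n}" by (simp add: derangements_def)
  then show ?thesis by auto
qed

lemma derangement_comp_transpose:
  assumes \<pi>: "\<pi> \<in> derangements S" and "i \<in> S" and c: "c \<in> S - {i, \<pi> i}"
    and i2: "\<pi> (\<pi> i) = i"
  shows "\<pi> \<circ> Transposition.transpose (\<pi> i) c \<in> derangements S"
proof -
  have p: "\<pi> permutes S" and d: "\<forall>x\<in>S. \<pi> x \<noteq> x" using \<pi> by (auto simp: derangements_def)
  have "\<pi> i \<in> S" using p \<open>i \<in> S\<close> by (metis permutes_in_image)
  then have "\<pi> \<circ> Transposition.transpose (\<pi> i) c permutes S"
    using c by (intro permutes_compose[OF permutes_swap_id p]) auto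
  moreover have "\<pi> c \<noteq> \<pi> i" using c permutes_inj[OF p] by (auto dest: injD)
  then have "\<forall>x\<in>S. (\<pi> \<circ> Transposition.transpose (\<pi> i) c) x \<noteq> x"
    using d c i2 by (auto simp: Transposition.transpose_def)
  ultimately show ?thesis by (simp add: derangements_def)
qed

lemma derangement_comp_transpose_inj:
  assumes p1: "\<pi>1 \<in> derangements S" and p2: "\<pi>2 \<in> derangements S" and i: "i \<in> S"
    and c1: "c1 \<in> S - {i, \<pi>1 i}" and c2: "c2 \<in> S - {i, \<pi>2 i}"
    and t1: "\<pi>1 (\<pi>1 i) = i" and t2: "\<pi>2 (\<pi>2 i) = i"
    and eq: "\<pi>1 \<circ> Transposition.transpose (\<pi>1 i) c1 = \<pi>2 \<circ> Transposition.transpose (\<pi>2 i) c2"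
  shows "\<pi>1 = \<pi>2" and "c1 = c2"
proof -
  have pp1: "\<pi>1 permutes S" and d1: "\<pi>1 i \<noteq> i" using p1 i by (auto simp: derangements_def)
  have d2: "\<pi>2 i \<noteq> i" using p2 i by (auto simp: derangements_def)
  define \<sigma> where "\<sigma> = \<pi>1 \<circ> Transposition.transpose (\<pi>1 i) c1"
  have same_image: "\<pi>1 i = \<pi>2 i"
    using c1 c2 d1 d2 fun_cong[OF eq, of i] by (auto simp: Transposition.transpose_def)
  have "\<sigma> c1 = i" using t1 by (simp add: \<sigma>_def)
  moreover have "\<sigma> c2 = i" using t2 by (simp add: \<sigma>_def eq)
  moreover have "inj \<sigma>" unfolding \<sigma>_def
    using permutes_inj[OF pp1] by (intro inj_compose) (auto simp: inj_transpose)
  ultimately show "c1 = c2" by (auto dest: injD)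
  then show "\<pi>1 = \<pi>2"
    using fun_cong[OF eq] same_image by (metis comp_apply transpose_involutory ext)
qed

text \<open>Composing a derangement with a transposition that breaks up the 2-cycle through
  \<open>i\<close> gives, for each of the \<open>card S - 2\<close> admissible partners \<open>c\<close>, a different derangement,
  and \<open>(\<pi>, c)\<close> is recovered from the result together with \<open>i\<close>.\<close>
lemma sum_card_period2_points_le:
  assumes "finite S"
  shows "(card S - 2) * (\<Sum>\<pi>\<in>derangements S. card (period2_points \<pi> S))
           \<le> card S * card (derangements S)"
proof -
  define D where "D = derangements S"
  define A where "A = (SIGMA \<pi>:D. period2_points \<pi> S)"
  define T where "T = (SIGMA x:A. S - {snd x, fst x (snd x)})"
  define \<Phi> where "\<Phi> x = (fst (fst x) \<circ> Transposition.transpose (fst (fst x) (snd (fst x))) (snd x), snd (fst x))"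
    for x :: "((nat \<Rightarrow> nat) \<times> nat) \<times> nat"
  have fD: "finite D" unfolding D_def using assms by (rule finite_derangements)
  have card_A: "card A = (\<Sum>\<pi>\<in>D. card (period2_points \<pi> S))"
    unfolding A_def period2_points_def using fD assms by simp
  have "card (S - {snd x, fst x (snd x)}) = card S - 2" if x_A: "x \<in> A" for x
  proof -
    obtain \<pi> i where x: "x = (\<pi>, i)" and "\<pi> \<in> D" and i: "i \<in> S"
      using x_A unfolding A_def period2_points_def by blast
    then have "\<pi> permutes S" and "\<pi> i \<noteq> i" by (auto simp: D_def derangements_def)
    then have "\<pi> i \<in> S" using i by (metis permutes_in_image)
    then show ?thesis using x i \<open>\<pi> i \<noteq> i\<close> assms by (simp add: card_Diff_subset)
  qed
  then have card_T: "card T = card A * (card S - 2)"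
    unfolding T_def using fD assms by (simp add: A_def period2_points_def)
  have "inj_on \<Phi> T"
  proof (rule inj_onI)
    fix x y assume "x \<in> T" "y \<in> T" "\<Phi> x = \<Phi> y"
    moreover obtain \<pi>1 i1 c1 \<pi>2 i2 c2 where "x = ((\<pi>1, i1), c1)" "y = ((\<pi>2, i2), c2)"
      by (metis prod.exhaust)
    ultimately show "x = y"
      using derangement_comp_transpose_inj[of \<pi>1 S \<pi>2 i1 c1 c2]
      by (auto simp: \<Phi>_def T_def A_def D_def period2_points_def)
  qed
  moreover have "\<Phi> ` T \<subseteq> D \<times> S"
    using derangement_comp_transpose
    by (fastforce simp: \<Phi>_def T_def A_def D_def period2_points_def)
  ultimately have "card T \<le> card (D \<times> S)"
    using fD assms by (intro card_inj_on_le) auto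
  then show ?thesis
    using card_T card_A by (simp add: D_def card_cartesian_product mult.commute)
qed

definition period2_fraction :: "nat \<Rightarrow> real" where
  "period2_fraction n = (\<Sum>\<pi>\<in>derangements {1..n}. real (card (period2_points \<pi> {1..n})))
                          / (card (derangements {1..n}) * real n)"

lemma period2_fraction_tendsto_0: "period2_fraction \<longlonglongrightarrow> 0"
proof (rule tendsto_sandwich[OF _ _ tendsto_const])
  show "(\<lambda>n::nat. 1 / (real n - 2)) \<longlonglongrightarrow> 0" by real_asymp
  have "0 \<le> period2_fraction n \<and> period2_fraction n \<le> 1 / (real n - 2)" if "3 \<le> n" for n
  proof -
    let ?D = "derangements {1..n}"
    have "0 < real (card ?D)"
      using finite_derangements[of "{1..n}"] derangements_atLeastAtMost_nonempty[of n] that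
      by (simp add: card_gt_0_iff)
    moreover have "real ((n - 2) * (\<Sum>\<pi>\<in>?D. card (period2_points \<pi> {1..n})))
        \<le> real (n * card ?D)"
      using sum_card_period2_points_le[of "{1..n}"] by (simp only: of_nat_le_iff) simp
    then have "(real n - 2) * (\<Sum>\<pi>\<in>?D. real (card (period2_points \<pi> {1..n})))
        \<le> real n * card ?D"
      using that by (simp add: of_nat_diff)
    ultimately show ?thesis
      using that by (auto simp: period2_fraction_def field_simps intro!: sum_nonneg divide_nonneg_nonneg)
  qed
  then show "eventually (\<lambda>n. 0 \<le> period2_fraction n) sequentially"
    and "eventually (\<lambda>n. period2_fraction n \<le> 1 / (real n - 2)) sequentially"
    by (auto intro: eventually_sequentiallyI[of 3])
qed

section \<open>The additive model\<close>

interpretation unif01: prob_space unif01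
  unfolding unif01_def by (rule prob_spaceI) (simp add: emeasure_restrict_space space_restrict_space)

lemma space_unif01: "space unif01 = {0..1}"
  unfolding unif01_def by (simp add: space_restrict_space)

lemma prob_space_Xdist: "prob_space (Xdist p)"
  unfolding Xdist_def by (intro prob_space_PiM) (simp add: unif01.prob_space_axioms)

lemma space_Xdist: "space (Xdist p) = PiE {1..p} (\<lambda>_. {0..1})"
  unfolding Xdist_def by (simp add: space_PiM space_unif01)

locale additive_model =
  fixes p j :: nat and m :: "nat \<Rightarrow> real \<Rightarrow> real" and K :: real and E :: "real measure"
  assumes j: "j \<in> {1..p}"
    and measurable_mtilde: "mtilde m p \<in> borel_measurable (Xdist p)"
    and bounded_mtilde: "\<forall>x\<in>space (Xdist p). \<bar>mtilde m p x\<bar> \<le> K"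
    and prob_space_E: "prob_space E" and sets_E: "sets E = sets borel"
    and integrable_E_pow4: "integrable E (\<lambda>e. e ^ 4)"
    and integral_E: "(\<integral>e. e \<partial>E) = 0"
begin

lemma sets_E_cong[measurable_cong]: "sets E = sets borel"
  by (rule sets_E)

sublocale E: prob_space E
  by (rule prob_space_E)

abbreviation Z :: "((nat \<Rightarrow> real) \<times> real) measure" where
  "Z \<equiv> Xdist p \<Otimes>\<^sub>M E"

sublocale Z: prob_space Z
  using prob_space_Xdist by (intro prob_space_pair) (simp_all add: prob_space_E)

lemma mtilde_fun_upd: "mtilde m p (x(j := t)) = mtilde m p x - m j (x j) + m j t"
proof -
  have split: "mtilde m p y = m j (y j) + (\<Sum>l\<in>{1..p}-{j}. m l (y l))" for y
    unfolding mtilde_def using j by (intro sum.remove) auto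
  have "(\<Sum>l\<in>{1..p}-{j}. m l ((x(j := t)) l)) = (\<Sum>l\<in>{1..p}-{j}. m l (x l))"
    by (intro sum.cong) auto
  then show ?thesis using split[of "x(j := t)"] split[of x] by simp
qed

lemma m_j_eq_mtilde:
  "m j t = mtilde m p ((\<lambda>l\<in>{1..p}. 0)(j := t)) - mtilde m p ((\<lambda>l\<in>{1..p}. 0)(j := 0)) + m j 0"
  by (simp add: mtilde_fun_upd)

lemma axis_in_space_Xdist: "t \<in> {0..1} \<Longrightarrow> (\<lambda>l\<in>{1..p}. 0)(j := t) \<in> space (Xdist p)"
  using j by (auto simp: space_Xdist PiE_def extensional_def)

lemma measurable_m_j[measurable]: "m j \<in> borel_measurable unif01"
proof -
  have axis: "(\<lambda>t. (\<lambda>l\<in>{1..p}. 0)(j := t)) = (\<lambda>t. \<lambda>l\<in>{1..p}. if l = j then t else 0::real)"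
    using j by (auto simp: fun_eq_iff)
  have "(\<lambda>t. (\<lambda>l\<in>{1..p}. 0::real)(j := t)) \<in> measurable unif01 (Xdist p)"
    unfolding axis Xdist_def by (intro measurable_restrict) (auto simp: space_unif01)
  from measurable_comp[OF this measurable_mtilde] show ?thesis
    by (subst m_j_eq_mtilde[abs_def]) (simp add: o_def)
qed

lemma bounded_m_j:
  assumes "t \<in> {0..1}"
  shows "\<bar>m j t\<bar> \<le> 2 * K + \<bar>m j 0\<bar>"
proof -
  have "\<bar>mtilde m p ((\<lambda>l\<in>{1..p}. 0)(j := s))\<bar> \<le> K" if "s \<in> {0..1}" for s
    using bounded_mtilde axis_in_space_Xdist[OF that] by blast
  from this[OF assms] this[of 0] show ?thesis
    by (subst m_j_eq_mtilde) auto
qed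

lemma integrable_m_j: "integrable unif01 (m j)"
  by (rule unif01.integrable_const_bound[where B = "2 * K + \<bar>m j 0\<bar>"])
    (use bounded_m_j in \<open>auto simp: space_unif01\<close>)

definition b :: "real \<Rightarrow> real" where
  "b t = m j t - (\<integral>s. m j s \<partial>unif01)"

lemma measurable_b[measurable]: "b \<in> borel_measurable unif01"
  unfolding b_def by measurable

lemma integrable_b_power: "integrable unif01 (\<lambda>t. b t ^ k)"
proof (rule unif01.integrable_const_bound[where B = "(2 * K + \<bar>m j 0\<bar> + \<bar>\<integral>s. m j s \<partial>unif01\<bar>) ^ k"])
  have "\<bar>b t\<bar> \<le> 2 * K + \<bar>m j 0\<bar> + \<bar>\<integral>s. m j s \<partial>unif01\<bar>" if "t \<in> {0..1}" for t
    using bounded_m_j[OF that] unfolding b_def by linarith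
  then show "AE t in unif01. norm (b t ^ k) \<le> (2 * K + \<bar>m j 0\<bar> + \<bar>\<integral>s. m j s \<partial>unif01\<bar>) ^ k"
    by (auto simp: space_unif01 power_abs intro!: AE_I2 power_mono)
qed measurable

lemma integral_b: "(\<integral>t. b t \<partial>unif01) = 0"
  unfolding b_def using integrable_m_j by (simp add: unif01.prob_space)

lemma var_m_j: "var unif01 (m j) = (\<integral>t. b t ^ 2 \<partial>unif01)"
  unfolding var_def b_def ..

definition B :: "(nat \<Rightarrow> real) \<times> real \<Rightarrow> real" where
  "B z = b (fst z j)"

lemma measurable_B[measurable]: "B \<in> borel_measurable Z"
proof -
  have "(\<lambda>x. x j) \<in> measurable (Xdist p) unif01"
    unfolding Xdist_def using j by measurable
  then show ?thesis unfolding B_def by measurable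
qed

definition mon :: "nat \<Rightarrow> nat \<Rightarrow> (nat \<Rightarrow> real) \<times> real \<Rightarrow> real" where
  "mon k l z = B z ^ k * snd z ^ l"

definition mom_b :: "nat \<Rightarrow> real" where
  "mom_b k = (\<integral>t. b t ^ k \<partial>unif01)"

definition mom_eps :: "nat \<Rightarrow> real" where
  "mom_eps l = (\<integral>e. e ^ l \<partial>E)"

abbreviation var_b :: real where
  "var_b \<equiv> mom_b 2"

abbreviation sigma2 :: real where
  "sigma2 \<equiv> mom_eps 2"

lemma mom_b_0[simp]: "mom_b 0 = 1" and mom_b_1[simp]: "mom_b (Suc 0) = 0"
  using integral_b by (simp_all add: mom_b_def unif01.prob_space)

lemma mom_eps_0[simp]: "mom_eps 0 = 1" and mom_eps_1[simp]: "mom_eps (Suc 0) = 0"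
  using integral_E by (simp_all add: mom_eps_def E.prob_space)

lemma var_E_eq_sigma2: "var E (\<lambda>e. e) = sigma2"
  unfolding var_def using integral_E by (simp add: mom_eps_def)

lemma
  assumes "l \<le> 4"
  shows integrable_mon[simp]: "integrable Z (mon k l)"
    and integral_mon[simp]: "integral\<^sup>L Z (mon k l) = mom_b k * mom_eps l"
proof -
  have int_b: "integrable (Xdist p) (\<lambda>x. b (x j) ^ k)"
    and integral_b_coord: "(\<integral>x. b (x j) ^ k \<partial>Xdist p) = mom_b k"
    using PiM_one_coord[OF unif01.prob_space_axioms, of "{1..p}" j "\<lambda>t. b t ^ k"] j
    by (simp_all add: Xdist_def integrable_b_power mom_b_def)
  have int_eps: "integrable E (\<lambda>e. e ^ l)"
    using integrable_power_le[OF _ sets_E integrable_E_pow4 _ assms] E.finite_measure_axioms by simp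
  show "integrable Z (mon k l)"
    using integrable_pair_mult[OF prob_space_Xdist prob_space_E int_b int_eps]
    by (simp add: mon_def[abs_def] B_def)
  show "integral\<^sup>L Z (mon k l) = mom_b k * mom_eps l"
    using integral_pair_mult[OF prob_space_Xdist prob_space_E int_b int_eps] integral_b_coord
    by (simp add: mon_def[abs_def] B_def mom_eps_def)
qed

lemma mon_mult[simp]: "mon k l z * mon k' l' z = mon (k + k') (l + l') z"
  by (simp add: mon_def power_add)

definition g :: "(nat \<Rightarrow> real) \<times> real \<Rightarrow> real" where
  "g z = 2 * B z ^ 2 - 2 * var_b + 2 * snd z * B z"

definition v :: "(nat \<Rightarrow> real) \<times> real \<Rightarrow> real" where
  "v z = B z + snd z"

lemma mon_forms:
  "B z = mon 1 0 z" "v z = mon 1 0 z + mon 0 1 z"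
  "g z = 2 * mon 2 0 z - 2 * var_b + 2 * mon 1 1 z"
  by (simp_all add: mon_def v_def g_def)

lemma
  shows integrable_B: "integrable Z B" and integrable_v: "integrable Z v"
    and integrable_g: "integrable Z g"
    and integrable_gg: "integrable Z (\<lambda>z. g z * g z)"
    and integrable_gv: "integrable Z (\<lambda>z. g z * v z)"
    and integrable_gB: "integrable Z (\<lambda>z. g z * B z)"
    and integrable_vv: "integrable Z (\<lambda>z. v z * v z)"
    and integrable_BB: "integrable Z (\<lambda>z. B z * B z)"
    and integrable_vB: "integrable Z (\<lambda>z. v z * B z)"
    and integrable_Bv: "integrable Z (\<lambda>z. B z * v z)"
  by (simp_all add: mon_forms[abs_def] algebra_simps)

lemma
  shows integral_B: "integral\<^sup>L Z B = 0" and integral_v: "integral\<^sup>L Z v = 0"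
    and integral_g: "integral\<^sup>L Z g = 0"
    and integral_vv: "(\<integral>z. v z * v z \<partial>Z) = var_b + sigma2"
    and integral_BB: "(\<integral>z. B z * B z \<partial>Z) = var_b"
    and integral_vB: "(\<integral>z. v z * B z \<partial>Z) = var_b"
    and integral_Bv: "(\<integral>z. B z * v z \<partial>Z) = var_b"
  by (simp_all add: mon_forms[abs_def] algebra_simps numeral_2_eq_2 Z.prob_space)

lemma hgam_eq_B:
  "hgam (mtilde m p) j \<gamma> \<omega> = (1 / \<gamma>) * (\<Sum>i\<in>{1..\<gamma>}.
     (snd (fst \<omega> i) + B (fst \<omega> i) - B (fst \<omega> (snd \<omega> i)))\<^sup>2 - (snd (fst \<omega> i))\<^sup>2)"
  unfolding hgam_def
  by (intro arg_cong2[where f = "(*)"] refl sum.cong) (simp_all add: mtilde_fun_upd B_def b_def)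

section \<open>Moments of the kernel for a fixed derangement\<close>

context
  fixes \<gamma> :: nat and \<pi> :: "nat \<Rightarrow> nat"
  assumes \<pi>: "\<pi> \<in> derangements {1..\<gamma>}"
begin

abbreviation P :: "(nat \<Rightarrow> (nat \<Rightarrow> real) \<times> real) measure" where
  "P \<equiv> PiM {1..\<gamma>} (\<lambda>_. Z)"

lemma \<pi>_in: "i \<in> {1..\<gamma>} \<Longrightarrow> \<pi> i \<in> {1..\<gamma>}"
  and \<pi>_neq: "i \<in> {1..\<gamma>} \<Longrightarrow> \<pi> i \<noteq> i"
  and \<pi>_inj: "\<pi> i = \<pi> k \<Longrightarrow> i = k"
proof -
  have "\<pi> permutes {1..\<gamma>}" using \<pi> by (simp add: derangements_def)
  then show "i \<in> {1..\<gamma>} \<Longrightarrow> \<pi> i \<in> {1..\<gamma>}" and "\<pi> i = \<pi> k \<Longrightarrow> i = k"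
    by (auto simp only: permutes_in_image dest: permutes_inj injD)
  show "i \<in> {1..\<gamma>} \<Longrightarrow> \<pi> i \<noteq> i" using \<pi> by (simp add: derangements_def)
qed

lemma
  assumes i: "i \<in> {1..\<gamma>}" and k: "k \<in> {1..\<gamma>}"
  shows integrable_g_g: "integrable P (\<lambda>z. g (z i) * g (z k))"
    and integral_g_g: "(\<integral>z. g (z i) * g (z k) \<partial>P) = (if i = k then (\<integral>z. g z * g z \<partial>Z) else 0)"
proof -
  have "integrable P (\<lambda>z. g (z i) * g (z k)) \<and>
      (\<integral>z. g (z i) * g (z k) \<partial>P) = (if i = k then (\<integral>z. g z * g z \<partial>Z) else 0)"
  proof (cases "i = k")
    case True
    then show ?thesis
      using PiM_one_coord[OF Z.prob_space_axioms _ i integrable_gg] by simp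
  next
    case False
    then show ?thesis
      using PiM_two_coords[OF Z.prob_space_axioms _ i k False integrable_g integrable_g]
      by (simp add: integral_g)
  qed
  then show "integrable P (\<lambda>z. g (z i) * g (z k))"
    and "(\<integral>z. g (z i) * g (z k) \<partial>P) = (if i = k then (\<integral>z. g z * g z \<partial>Z) else 0)"
    by auto
qed

lemma
  assumes i: "i \<in> {1..\<gamma>}" and k: "k \<in> {1..\<gamma>}"
  shows integrable_g_vB: "integrable P (\<lambda>z. g (z k) * (v (z i) * B (z (\<pi> i))))"
    and integral_g_vB: "(\<integral>z. g (z k) * (v (z i) * B (z (\<pi> i))) \<partial>P) = 0"
proof -
  have \<pi>i: "\<pi> i \<in> {1..\<gamma>}" "i \<noteq> \<pi> i" using \<pi>_in[OF i] \<pi>_neq[OF i] by auto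
  consider "k = i" | "k = \<pi> i" | "k \<noteq> i" "k \<noteq> \<pi> i" by blast
  then have "integrable P (\<lambda>z. g (z k) * (v (z i) * B (z (\<pi> i)))) \<and>
      (\<integral>z. g (z k) * (v (z i) * B (z (\<pi> i))) \<partial>P) = 0"
  proof cases
    case 1
    then show ?thesis
      using PiM_two_coords[OF Z.prob_space_axioms _ i \<pi>i integrable_gv integrable_B]
      by (simp add: integral_B mult.assoc)
  next
    case 2
    then show ?thesis
      using PiM_two_coords[OF Z.prob_space_axioms _ i \<pi>i integrable_v integrable_gB]
      by (simp add: integral_v mult_ac)
  next
    case 3
    then show ?thesis
      using PiM_three_coords[OF Z.prob_space_axioms _ k i \<pi>i(1) 3 \<pi>i(2) integrable_g integrable_v integrable_B]
      by (simp add: integral_g mult.assoc)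
  qed
  then show "integrable P (\<lambda>z. g (z k) * (v (z i) * B (z (\<pi> i))))"
    and "(\<integral>z. g (z k) * (v (z i) * B (z (\<pi> i))) \<partial>P) = 0"
    by auto
qed

text \<open>Only a 2-cycle \<open>\<pi> i = k\<close>, \<open>\<pi> k = i\<close> couples two different summands of \<open>sum_vB\<close>;
  in every other case some factor \<open>v\<close> or \<open>B\<close> sits alone on its coordinate and has mean zero.\<close>
lemma
  assumes i: "i \<in> {1..\<gamma>}" and k: "k \<in> {1..\<gamma>}"
  shows integrable_vB_vB: "integrable P (\<lambda>z. (v (z i) * B (z (\<pi> i))) * (v (z k) * B (z (\<pi> k))))"
    and integral_vB_vB: "(\<integral>z. (v (z i) * B (z (\<pi> i))) * (v (z k) * B (z (\<pi> k))) \<partial>P)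
        = (if i = k then (var_b + sigma2) * var_b
           else if \<pi> i = k \<and> \<pi> k = i then var_b * var_b else 0)"
proof -
  have \<pi>i: "\<pi> i \<in> {1..\<gamma>}" "i \<noteq> \<pi> i" using \<pi>_in[OF i] \<pi>_neq[OF i] by auto
  have \<pi>k: "\<pi> k \<in> {1..\<gamma>}" "k \<noteq> \<pi> k" using \<pi>_in[OF k] \<pi>_neq[OF k] by auto
  note Z = Z.prob_space_axioms finite_atLeastAtMost
  let ?f = "\<lambda>z. (v (z i) * B (z (\<pi> i))) * (v (z k) * B (z (\<pi> k)))"
  let ?r = "if i = k then (var_b + sigma2) * var_b
            else if \<pi> i = k \<and> \<pi> k = i then var_b * var_b else 0"
  consider "i = k" | "i \<noteq> k" "\<pi> i = k" "\<pi> k = i" | "i \<noteq> k" "\<pi> i = k" "\<pi> k \<noteq> i"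
    | "i \<noteq> k" "\<pi> i \<noteq> k" "\<pi> k = i" | "i \<noteq> k" "\<pi> i \<noteq> k" "\<pi> k \<noteq> i"
    by blast
  then have "integrable P ?f \<and> integral\<^sup>L P ?f = ?r"
  proof cases
    case 1
    then have "?f = (\<lambda>z. (\<lambda>y. v y * v y) (z i) * (\<lambda>y. B y * B y) (z (\<pi> i)))"
      by (auto simp: fun_eq_iff algebra_simps)
    then show ?thesis
      using PiM_two_coords[OF Z i \<pi>i integrable_vv integrable_BB] 1
      by (simp add: integral_vv integral_BB)
  next
    case 2
    then have "?f = (\<lambda>z. (\<lambda>y. v y * B y) (z i) * (\<lambda>y. B y * v y) (z k))"
      by (auto simp: fun_eq_iff algebra_simps)
    then show ?thesis
      using PiM_two_coords[OF Z i k 2(1) integrable_vB integrable_Bv] 2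
      by (simp add: integral_vB integral_Bv)
  next
    case 3
    then have "?f = (\<lambda>z. v (z i) * (\<lambda>y. B y * v y) (z k) * B (z (\<pi> k)))"
      by (auto simp: fun_eq_iff algebra_simps)
    then show ?thesis
      using PiM_three_coords[OF Z i k \<pi>k(1) 3(1) not_sym[OF 3(3)] \<pi>k(2) integrable_v integrable_Bv integrable_B] 3
      by (auto simp: integral_v)
  next
    case 4
    then have "?f = (\<lambda>z. (\<lambda>y. v y * B y) (z i) * B (z (\<pi> i)) * v (z k))"
      by (auto simp: fun_eq_iff algebra_simps)
    then show ?thesis
      using PiM_three_coords[OF Z i \<pi>i(1) k \<pi>i(2) 4(1) 4(2) integrable_vB integrable_B integrable_v] 4
      by (auto simp: integral_v)
  next
    case 5
    then have "?f = (\<lambda>z. v (z i) * B (z (\<pi> i)) * v (z k) * B (z (\<pi> k)))"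
      by (auto simp: fun_eq_iff algebra_simps)
    moreover have "\<pi> i \<noteq> \<pi> k" using 5(1) \<pi>_inj by blast
    ultimately show ?thesis
      using PiM_four_coords[OF Z i \<pi>i(1) k \<pi>k(1) \<pi>i(2) 5(1) 5(2) not_sym[OF 5(3)] \<open>\<pi> i \<noteq> \<pi> k\<close> \<pi>k(2)
          integrable_v integrable_B integrable_v integrable_B] 5
      by (auto simp: integral_v)
  qed
  then show "integrable P ?f" and "integral\<^sup>L P ?f = ?r" by auto
qed

definition sum_g :: "(nat \<Rightarrow> (nat \<Rightarrow> real) \<times> real) \<Rightarrow> real" where
  "sum_g z = (\<Sum>i\<in>{1..\<gamma>}. g (z i))"

definition sum_vB :: "(nat \<Rightarrow> (nat \<Rightarrow> real) \<times> real) \<Rightarrow> real" where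
  "sum_vB z = (\<Sum>i\<in>{1..\<gamma>}. v (z i) * B (z (\<pi> i)))"

lemma integrable_sum_g: "integrable P sum_g" and integral_sum_g: "integral\<^sup>L P sum_g = 0"
proof -
  have g_i: "integrable P (\<lambda>z. g (z i))" "(\<integral>z. g (z i) \<partial>P) = 0" if "i \<in> {1..\<gamma>}" for i
    using PiM_one_coord[OF Z.prob_space_axioms _ that integrable_g] by (simp_all add: integral_g)
  then show "integrable P sum_g"
    unfolding sum_g_def[abs_def] by (intro Bochner_Integration.integrable_sum) auto
  show "integral\<^sup>L P sum_g = 0"
    unfolding sum_g_def[abs_def] using g_i by (subst Bochner_Integration.integral_sum) auto
qed

lemma integrable_sum_vB: "integrable P sum_vB" and integral_sum_vB: "integral\<^sup>L P sum_vB = 0"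
proof -
  have vB_i: "integrable P (\<lambda>z. v (z i) * B (z (\<pi> i)))" "(\<integral>z. v (z i) * B (z (\<pi> i)) \<partial>P) = 0"
    if "i \<in> {1..\<gamma>}" for i
    using PiM_two_coords[OF Z.prob_space_axioms _ that \<pi>_in[OF that] _ integrable_v integrable_B]
      \<pi>_neq[OF that] by (auto simp: integral_B)
  then show "integrable P sum_vB"
    unfolding sum_vB_def[abs_def] by (intro Bochner_Integration.integrable_sum) auto
  show "integral\<^sup>L P sum_vB = 0"
    unfolding sum_vB_def[abs_def] using vB_i by (subst Bochner_Integration.integral_sum) auto
qed

lemma
  shows integrable_sum_g_sq: "integrable P (\<lambda>z. sum_g z * sum_g z)"
    and integral_sum_g_sq: "(\<integral>z. sum_g z * sum_g z \<partial>P) = \<gamma> * (\<integral>z. g z * g z \<partial>Z)"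
proof -
  have eq: "(\<lambda>z. sum_g z * sum_g z) = (\<lambda>z. \<Sum>i\<in>{1..\<gamma>}. \<Sum>k\<in>{1..\<gamma>}. g (z i) * g (z k))"
    by (simp add: fun_eq_iff sum_g_def sum_product)
  show "integrable P (\<lambda>z. sum_g z * sum_g z)"
    unfolding eq by (intro integrable_double_sum integrable_g_g) auto
  have "(\<integral>z. sum_g z * sum_g z \<partial>P)
      = (\<Sum>i\<in>{1..\<gamma>}. \<Sum>k\<in>{1..\<gamma>}. \<integral>z. g (z i) * g (z k) \<partial>P)"
    unfolding eq by (intro integral_double_sum integrable_g_g) auto
  also have "\<dots> = (\<Sum>i\<in>{1..\<gamma>}. \<Sum>k\<in>{1..\<gamma>}. if i = k then (\<integral>z. g z * g z \<partial>Z) else 0)"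
    using integral_g_g by (intro sum.cong) auto
  finally show "(\<integral>z. sum_g z * sum_g z \<partial>P) = \<gamma> * (\<integral>z. g z * g z \<partial>Z)"
    by (simp add: sum.delta)
qed

lemma
  shows integrable_sum_g_sum_vB: "integrable P (\<lambda>z. sum_g z * sum_vB z)"
    and integral_sum_g_sum_vB: "(\<integral>z. sum_g z * sum_vB z \<partial>P) = 0"
proof -
  have eq: "(\<lambda>z. sum_g z * sum_vB z)
      = (\<lambda>z. \<Sum>k\<in>{1..\<gamma>}. \<Sum>i\<in>{1..\<gamma>}. g (z k) * (v (z i) * B (z (\<pi> i))))"
    by (simp add: fun_eq_iff sum_g_def sum_vB_def sum_product)
  show "integrable P (\<lambda>z. sum_g z * sum_vB z)"
    unfolding eq by (intro integrable_double_sum integrable_g_vB) auto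
  have "(\<integral>z. sum_g z * sum_vB z \<partial>P)
      = (\<Sum>k\<in>{1..\<gamma>}. \<Sum>i\<in>{1..\<gamma>}. \<integral>z. g (z k) * (v (z i) * B (z (\<pi> i))) \<partial>P)"
    unfolding eq by (intro integral_double_sum integrable_g_vB) auto
  also have "\<dots> = 0"
    using integral_g_vB by (intro sum.neutral ballI) auto
  finally show "(\<integral>z. sum_g z * sum_vB z \<partial>P) = 0" .
qed

lemma
  shows integrable_sum_vB_sq: "integrable P (\<lambda>z. sum_vB z * sum_vB z)"
    and integral_sum_vB_sq: "(\<integral>z. sum_vB z * sum_vB z \<partial>P)
      = \<gamma> * ((var_b + sigma2) * var_b) + card (period2_points \<pi> {1..\<gamma>}) * (var_b * var_b)"
proof -
  have eq: "(\<lambda>z. sum_vB z * sum_vB z) = (\<lambda>z. \<Sum>i\<in>{1..\<gamma>}. \<Sum>k\<in>{1..\<gamma>}.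
      (v (z i) * B (z (\<pi> i))) * (v (z k) * B (z (\<pi> k))))"
    by (simp add: fun_eq_iff sum_vB_def sum_product)
  show "integrable P (\<lambda>z. sum_vB z * sum_vB z)"
    unfolding eq by (intro integrable_double_sum integrable_vB_vB) auto
  have "(\<integral>z. sum_vB z * sum_vB z \<partial>P) = (\<Sum>i\<in>{1..\<gamma>}. \<Sum>k\<in>{1..\<gamma>}.
      \<integral>z. (v (z i) * B (z (\<pi> i))) * (v (z k) * B (z (\<pi> k))) \<partial>P)"
    unfolding eq by (intro integral_double_sum integrable_vB_vB) auto
  also have "\<dots> = (\<Sum>i\<in>{1..\<gamma>}. \<Sum>k\<in>{1..\<gamma>}.
      (if k = i then (var_b + sigma2) * var_b else 0)
      + (if k = \<pi> i then (if \<pi> (\<pi> i) = i then var_b * var_b else 0) else 0))"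
    using integral_vB_vB \<pi>_neq[THEN not_sym] by (intro sum.cong refl) auto
  also have "\<dots> = (\<Sum>i\<in>{1..\<gamma>}. (var_b + sigma2) * var_b + (if \<pi> (\<pi> i) = i then var_b * var_b else 0))"
    using \<pi>_in by (intro sum.cong refl) (simp add: sum.distrib sum.delta')
  also have "\<dots> = \<gamma> * ((var_b + sigma2) * var_b) + card (period2_points \<pi> {1..\<gamma>}) * (var_b * var_b)"
    by (simp add: sum.distrib period2_points_def sum.inter_filter[symmetric])
  finally show "(\<integral>z. sum_vB z * sum_vB z \<partial>P)
      = \<gamma> * ((var_b + sigma2) * var_b) + card (period2_points \<pi> {1..\<gamma>}) * (var_b * var_b)" .
qed

text \<open>Since \<open>\<pi>\<close> permutes the indices, the squares \<open>B (z (\<pi> i))\<^sup>2\<close> sum to the same as the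
  \<open>B (z i)\<^sup>2\<close>, so only the cross terms involving \<open>\<pi>\<close> survive in \<open>sum_vB\<close>.\<close>
lemma hgam_decomp:
  assumes "0 < \<gamma>"
  shows "hgam (mtilde m p) j \<gamma> (z, \<pi>) = (sum_g z - 2 * sum_vB z) / \<gamma> + 2 * var_b"
proof -
  have "\<pi> permutes {1..\<gamma>}" using \<pi> by (simp add: derangements_def)
  then have perm: "(\<Sum>i\<in>{1..\<gamma>}. (B (z (\<pi> i)))\<^sup>2) = (\<Sum>i\<in>{1..\<gamma>}. (B (z i))\<^sup>2)"
    using sum.permute[of \<pi> "{1..\<gamma>}" "\<lambda>i. (B (z i))\<^sup>2"] by (simp add: o_def)
  have "(\<Sum>i\<in>{1..\<gamma>}. (snd (z i) + B (z i) - B (z (\<pi> i)))\<^sup>2 - (snd (z i))\<^sup>2)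
      = (\<Sum>i\<in>{1..\<gamma>}. g (z i) - 2 * (v (z i) * B (z (\<pi> i)))
          + ((B (z (\<pi> i)))\<^sup>2 - (B (z i))\<^sup>2) + 2 * var_b)"
    by (intro sum.cong refl) (simp add: g_def v_def power2_eq_square algebra_simps)
  also have "\<dots> = sum_g z - 2 * sum_vB z + 2 * \<gamma> * var_b"
    using perm by (simp add: sum_g_def sum_vB_def sum.distrib sum_subtractf sum_distrib_left)
  finally show ?thesis
    using assms by (simp add: hgam_eq_B field_simps)
qed

lemma
  assumes "0 < \<gamma>"
  shows integrable_hgam_given: "integrable P (\<lambda>z. hgam (mtilde m p) j \<gamma> (z, \<pi>))"
    and integral_hgam_given: "(\<integral>z. hgam (mtilde m p) j \<gamma> (z, \<pi>) \<partial>P) = 2 * var_b"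
    and integrable_hgam_dev_given:
      "integrable P (\<lambda>z. (hgam (mtilde m p) j \<gamma> (z, \<pi>) - 2 * var_b)\<^sup>2)"
    and integral_hgam_dev_given:
      "(\<integral>z. (hgam (mtilde m p) j \<gamma> (z, \<pi>) - 2 * var_b)\<^sup>2 \<partial>P)
         = (\<gamma> * (\<integral>z. g z * g z \<partial>Z) + 4 * (\<gamma> * ((var_b + sigma2) * var_b)
            + card (period2_points \<pi> {1..\<gamma>}) * (var_b * var_b))) / \<gamma>\<^sup>2"
proof -
  interpret P: prob_space P by (intro prob_space_PiM) (simp add: Z.prob_space_axioms)
  have h: "(\<lambda>z. hgam (mtilde m p) j \<gamma> (z, \<pi>)) = (\<lambda>z. (sum_g z - 2 * sum_vB z) / \<gamma> + 2 * var_b)"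
    using assms by (simp add: fun_eq_iff hgam_decomp)
  have int_centred: "integrable P (\<lambda>z. (sum_g z - 2 * sum_vB z) / \<gamma>)"
    using integrable_sum_g integrable_sum_vB
    by (intro integrable_divide_zero Bochner_Integration.integrable_diff integrable_mult_right)
  have "(\<integral>z. (sum_g z - 2 * sum_vB z) / \<gamma> \<partial>P) = 0"
    using integrable_sum_g integrable_sum_vB integral_sum_g integral_sum_vB by simp
  then show "(\<integral>z. hgam (mtilde m p) j \<gamma> (z, \<pi>) \<partial>P) = 2 * var_b"
    unfolding h Bochner_Integration.integral_add[OF int_centred P.integrable_const]
    using P.prob_space by simp
  show "integrable P (\<lambda>z. hgam (mtilde m p) j \<gamma> (z, \<pi>))"
    unfolding h using int_centred by (rule Bochner_Integration.integrable_add[OF _ P.integrable_const])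
  have "(\<lambda>z. (hgam (mtilde m p) j \<gamma> (z, \<pi>) - 2 * var_b)\<^sup>2)
      = (\<lambda>z. (sum_g z * sum_g z - 4 * (sum_g z * sum_vB z) + 4 * (sum_vB z * sum_vB z)) / \<gamma>\<^sup>2)"
    using assms by (simp add: fun_eq_iff hgam_decomp field_simps power2_eq_square)
  then show "integrable P (\<lambda>z. (hgam (mtilde m p) j \<gamma> (z, \<pi>) - 2 * var_b)\<^sup>2)"
    and "(\<integral>z. (hgam (mtilde m p) j \<gamma> (z, \<pi>) - 2 * var_b)\<^sup>2 \<partial>P)
         = (\<gamma> * (\<integral>z. g z * g z \<partial>Z) + 4 * (\<gamma> * ((var_b + sigma2) * var_b)
            + card (period2_points \<pi> {1..\<gamma>}) * (var_b * var_b))) / \<gamma>\<^sup>2"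
    using integrable_sum_g_sq integral_sum_g_sq integrable_sum_g_sum_vB integral_sum_g_sum_vB
      integrable_sum_vB_sq integral_sum_vB_sq
    by simp_all
qed

end

section \<open>Averaging over the random derangement\<close>

lemma sample_space_eq:
  "sample_space p E \<gamma> = PiM {1..\<gamma>} (\<lambda>_. Z) \<Otimes>\<^sub>M measure_pmf (pmf_of_set (derangements {1..\<gamma>}))"
  by (simp add: sample_space_def Zdist_def)

lemma measurable_hgam:
  "hgam (mtilde m p) j \<gamma> \<in> borel_measurable (PiM {1..\<gamma>} (\<lambda>_. Z) \<Otimes>\<^sub>M measure_pmf Q)"
proof -
  let ?S = "PiM {1..\<gamma>} (\<lambda>_. Z) \<Otimes>\<^sub>M measure_pmf Q"
  have B_k: "(\<lambda>\<omega>. B (fst \<omega> k)) \<in> borel_measurable ?S" for k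
  proof (cases "k \<in> {1..\<gamma>}")
    case True
    then show ?thesis by measurable
  next
    case False
    then have "fst \<omega> k = undefined" if "\<omega> \<in> space ?S" for \<omega>
      using that by (auto simp: space_pair_measure space_PiM PiE_def extensional_def)
    then show ?thesis
      by (subst measurable_cong[where g = "\<lambda>_. B undefined"]) auto
  qed
  have "(\<lambda>\<omega>. B (fst \<omega> (snd \<omega> i))) \<in> borel_measurable ?S" for i
  proof (rule measurable_compose_countable[where f = "\<lambda>k \<omega>. B (fst \<omega> k)"])
    have "snd \<in> measurable ?S (count_space UNIV)"
      using measurable_snd[of "PiM {1..\<gamma>} (\<lambda>_. Z)" "measure_pmf Q"] by simp
    then show "(\<lambda>\<omega>. snd \<omega> i) \<in> measurable ?S (count_space UNIV)"
      by (rule measurable_compose) simp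
  qed (rule B_k)
  moreover have "(\<lambda>\<omega>. snd (fst \<omega> i)) \<in> borel_measurable ?S" if "i \<in> {1..\<gamma>}" for i
    using that by measurable
  ultimately show ?thesis
    unfolding hgam_eq_B[abs_def] by (intro borel_measurable_times borel_measurable_sum) auto
qed

lemma integral_hgam:
  assumes "2 \<le> \<gamma>"
  shows "integral\<^sup>L (sample_space p E \<gamma>) (hgam (mtilde m p) j \<gamma>) = 2 * var_b"
proof -
  let ?D = "derangements {1..\<gamma>}"
  have D: "finite ?D" "?D \<noteq> {}"
    using finite_derangements derangements_atLeastAtMost_nonempty assms by auto
  have "integral\<^sup>L (sample_space p E \<gamma>) (hgam (mtilde m p) j \<gamma>)
      = (\<Sum>\<pi>\<in>?D. \<integral>z. hgam (mtilde m p) j \<gamma> (z, \<pi>) \<partial>PiM {1..\<gamma>} (\<lambda>_. Z)) / card ?D"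
    unfolding sample_space_eq
    using assms by (intro integral_pair_pmf_of_set D measurable_hgam prob_space_PiM
        integrable_hgam_given Z.prob_space_axioms) auto
  also have "\<dots> = (\<Sum>\<pi>\<in>?D. 2 * var_b) / card ?D"
    using assms by (intro arg_cong2[where f = "(/)"] sum.cong refl integral_hgam_given) auto
  also have "\<dots> = 2 * var_b"
    using D by simp
  finally show ?thesis .
qed

lemma importance_eq: "importance (mtilde m p) p E j = 2 * var_b"
proof -
  have integrand: "(mtilde m p (fst (fst \<omega>)) + snd (fst \<omega>) - mtilde m p ((fst (fst \<omega>))(j := snd \<omega>)))\<^sup>2
      = v (fst \<omega>) * v (fst \<omega>) - 2 * (v (fst \<omega>) * b (snd \<omega>)) + b (snd \<omega>) ^ 2" for \<omega>
    by (simp add: mtilde_fun_upd v_def B_def b_def power2_eq_square algebra_simps)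
  note pair = integrable_pair_mult[OF Z.prob_space_axioms unif01.prob_space_axioms]
    integral_pair_mult[OF Z.prob_space_axioms unif01.prob_space_axioms]
  have vv: "integrable (Z \<Otimes>\<^sub>M unif01) (\<lambda>\<omega>. v (fst \<omega>) * v (fst \<omega>))"
    "(\<integral>\<omega>. v (fst \<omega>) * v (fst \<omega>) \<partial>(Z \<Otimes>\<^sub>M unif01)) = var_b + sigma2"
    using pair[OF integrable_vv unif01.integrable_const[of 1]]
    by (simp_all add: integral_vv unif01.prob_space)
  have vb: "integrable (Z \<Otimes>\<^sub>M unif01) (\<lambda>\<omega>. v (fst \<omega>) * b (snd \<omega>))"
    "(\<integral>\<omega>. v (fst \<omega>) * b (snd \<omega>) \<partial>(Z \<Otimes>\<^sub>M unif01)) = 0"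
    using pair[OF integrable_v integrable_b_power[of 1]] by (simp_all add: integral_v)
  have bb: "integrable (Z \<Otimes>\<^sub>M unif01) (\<lambda>\<omega>. b (snd \<omega>) ^ 2)"
    "(\<integral>\<omega>. b (snd \<omega>) ^ 2 \<partial>(Z \<Otimes>\<^sub>M unif01)) = var_b"
    using pair[OF Z.integrable_const[of 1] integrable_b_power[of 2]]
    by (simp_all add: Z.prob_space mom_b_def)
  have "(\<integral>\<omega>. (mtilde m p (fst (fst \<omega>)) + snd (fst \<omega>) - mtilde m p ((fst (fst \<omega>))(j := snd \<omega>)))\<^sup>2
      \<partial>(Z \<Otimes>\<^sub>M unif01)) = 2 * var_b + sigma2"
    unfolding integrand using vv vb bb by simp
  then show ?thesis
    by (simp add: importance_def Zdist_def var_E_eq_sigma2)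
qed

definition c1 :: real where
  "c1 = (\<integral>z. g z * g z \<partial>Z) + 4 * ((var_b + sigma2) * var_b)"

lemma zeta_eq:
  assumes "2 \<le> \<gamma>"
  shows "zeta (mtilde m p) p E j \<gamma> = (c1 + 4 * var_b\<^sup>2 * period2_fraction \<gamma>) / \<gamma>"
proof -
  let ?D = "derangements {1..\<gamma>}"
  let ?N = "\<lambda>\<pi>. real (card (period2_points \<pi> {1..\<gamma>}))"
  have D: "finite ?D" "?D \<noteq> {}"
    using finite_derangements derangements_atLeastAtMost_nonempty assms by auto
  then have "0 < real (card ?D)" by (simp add: card_gt_0_iff)
  have "0 < \<gamma>" using assms by simp
  have "zeta (mtilde m p) p E j \<gamma> = (\<integral>\<omega>. (hgam (mtilde m p) j \<gamma> \<omega> - 2 * var_b)\<^sup>2 \<partial>sample_space p E \<gamma>)"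
    unfolding zeta_def var_def integral_hgam[OF assms] ..
  also have "\<dots> = (\<Sum>\<pi>\<in>?D. \<integral>z. (hgam (mtilde m p) j \<gamma> (z, \<pi>) - 2 * var_b)\<^sup>2 \<partial>PiM {1..\<gamma>} (\<lambda>_. Z)) / card ?D"
    unfolding sample_space_eq
    using assms measurable_hgam
    by (intro integral_pair_pmf_of_set D prob_space_PiM integrable_hgam_dev_given
        Z.prob_space_axioms) auto
  also have "\<dots> = (\<Sum>\<pi>\<in>?D. (\<gamma> * c1 + 4 * var_b\<^sup>2 * ?N \<pi>) / \<gamma>\<^sup>2) / card ?D"
  proof (intro arg_cong2[where f = "(/)"] sum.cong refl)
    fix \<pi> assume "\<pi> \<in> ?D"
    then show "(\<integral>z. (hgam (mtilde m p) j \<gamma> (z, \<pi>) - 2 * var_b)\<^sup>2 \<partial>PiM {1..\<gamma>} (\<lambda>_. Z))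
        = (\<gamma> * c1 + 4 * var_b\<^sup>2 * ?N \<pi>) / \<gamma>\<^sup>2"
      using assms unfolding integral_hgam_dev_given[OF \<open>\<pi> \<in> ?D\<close> \<open>0 < \<gamma>\<close>]
      by (simp add: c1_def algebra_simps power2_eq_square)
  qed
  also have "\<dots> = (c1 + 4 * var_b\<^sup>2 * period2_fraction \<gamma>) / \<gamma>"
    using \<open>0 < real (card ?D)\<close> assms
    by (simp add: period2_fraction_def sum_divide_distrib[symmetric] sum.distrib
        sum_distrib_left field_simps power2_eq_square)
  finally show ?thesis .
qed

lemma c1_pos:
  assumes "0 < var_b"
  shows "0 < c1"
proof -
  have "0 \<le> sigma2" by (simp add: mom_eps_def)
  with assms have "0 < (var_b + sigma2) * var_b" by simp
  moreover have "0 \<le> (\<integral>z. g z * g z \<partial>Z)" by simp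
  ultimately show ?thesis
    unfolding c1_def by linarith
qed

lemma zeta_asymp_equiv:
  assumes "0 < var_b"
  shows "(\<lambda>\<gamma>. zeta (mtilde m p) p E j \<gamma>) \<sim>[sequentially] (\<lambda>\<gamma>. c1 / real \<gamma>)"
proof (rule asymp_equivI')
  have "eventually (\<lambda>\<gamma>. 1 + 4 * var_b\<^sup>2 / c1 * period2_fraction \<gamma>
      = zeta (mtilde m p) p E j \<gamma> / (c1 / real \<gamma>)) sequentially"
    using c1_pos[OF assms]
    by (intro eventually_sequentiallyI[of 2]) (simp add: zeta_eq field_simps)
  moreover have "(\<lambda>\<gamma>. 1 + 4 * var_b\<^sup>2 / c1 * period2_fraction \<gamma>) \<longlonglongrightarrow> 1"
    using tendsto_add[OF tendsto_const[of 1]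
        tendsto_mult[OF tendsto_const[of "4 * var_b\<^sup>2 / c1"] period2_fraction_tendsto_0]]
    by simp
  ultimately show "(\<lambda>\<gamma>. zeta (mtilde m p) p E j \<gamma> / (c1 / real \<gamma>)) \<longlonglongrightarrow> 1"
    by (rule Lim_transform_eventually[rotated])
qed

end

theorem mainTheorem7:
  fixes p j :: nat and m :: "nat \<Rightarrow> real \<Rightarrow> real" and K :: real and E :: "real measure"
  assumes "j \<in> {1..p}"
    and "mtilde m p \<in> borel_measurable (Xdist p)"
    and "K > 0"
    and "\<forall>x\<in>space (Xdist p). \<bar>mtilde m p x\<bar> \<le> K"
    and "prob_space E" and "sets E = sets borel"
    and "integrable E (\<lambda>e. e ^ 4)"
    and "(\<integral>e. e \<partial>E) = 0"
    and "var E (\<lambda>e. e) > 0"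
    and "var unif01 (m j) > 0"
  shows "\<exists>c1>0.
           (\<forall>\<gamma>\<ge>2. (\<integral>\<omega>. (hgam (mtilde m p) j \<gamma> \<omega> - importance (mtilde m p) p E j)\<^sup>2
                        \<partial>sample_space p E \<gamma>) = zeta (mtilde m p) p E j \<gamma>)
         \<and> (\<lambda>\<gamma>. zeta (mtilde m p) p E j \<gamma>) \<sim>[sequentially] (\<lambda>\<gamma>. c1 / real \<gamma>)"
proof -
  interpret additive_model p j m K E
    by (rule additive_model.intro[OF assms(1,2,4-8)])
  have "0 < var_b"
    using assms(10) by (simp add: var_m_j mom_b_def)
  have "(\<integral>\<omega>. (hgam (mtilde m p) j \<gamma> \<omega> - importance (mtilde m p) p E j)\<^sup>2 \<partial>sample_space p E \<gamma>)
      = zeta (mtilde m p) p E j \<gamma>" if "2 \<le> \<gamma>" for \<gamma>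
    unfolding zeta_def var_def integral_hgam[OF that] importance_eq ..
  then show ?thesis
    using c1_pos[OF \<open>0 < var_b\<close>] zeta_asymp_equiv[OF \<open>0 < var_b\<close>] by (intro exI[of _ c1]) simp
qed

end
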